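(* Let $X_{1j},\dots,X_{nj}$ be i.i.d. copies of $X_j$, let $\mathbb P_n\pi(X_j)\pi(X_j)^T=n^{-1}\sum_{i=1}^n\pi(X_{ij})\pi(X_{ij})^T$ and $D_j=\mathbb P_n\pi(X_j)\pi(X_j)^T-E\,\pi(X_j)\pi(X_j)^T$. Suppose there are positive constants $b_2,b_3$ such that $\lambda_{\max}(E\,\pi(X_j)\pi(X_j)^T)\le b_2N^{-1}$ for all $j$ and $E(B_m^2(X_{ij}))\le b_3N^{-1}$ for all $1\le m\le N$, $i$, $j$. Then: (1) there exists a positive constant $c_4$ such that for all $n$ sufficiently large $$P\big(\lambda_{\max}(\mathbb P_n\pi(X_j)\pi(X_j)^T)\ge(b_2+1)N^{-1}\big)\le2N^2\exp(-c_4nN^{-3});$$ (2) for any $c_5>0$ there exists a positive constant $c_6$ such that for all $n$ sufficiently large $$P\big(\max(|\lambda_{\max}(D_j)|,|\lambda_{\min}(D_j)|)\ge c_5N^{-1}n^{-\tau}\big)\le2N^2\exp(-c_6N^{-3}n^{1-2\tau}).$$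
   Context: $X_j$ is a random variable with values in $[0,1]$. $\pi(t)=(B_1(t),\dots,B_N(t))^T$ is the vector of $N=k+l$ normalized $B$-spline basis functions of order $l+1$ with knots $0=s_0<\dots<s_k=1$, with $\sup_t|B_m(t)|\le1$; $N$ may depend on $n$. $\tau\ge0$ is a fixed constant. $\lambda_{\max}$ and $\lambda_{\min}$ denote largest and smallest eigenvalues. *)

theory Defs
  imports "HOL-Probability.Probability" "Jordan_Normal_Form.Char_Poly"
begin

(* Extended knot vector for B-splines of order l+1 with knots 0 = s_0 < ... < s_k = 1:
   t_0 = ... = t_l = 0,  t_{l+i} = s_i (0 <= i <= k),  t_{k+l} = ... = t_{k+2l} = 1. *)
definition ext_knot :: "nat \<Rightarrow> nat \<Rightarrow> (nat \<Rightarrow> real) \<Rightarrow> nat \<Rightarrow> real" where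
  "ext_knot l k s i = (if i \<le> l then 0 else if i \<le> l + k then s (i - l) else 1)"

(* Normalized B-splines via the Cox--de Boor recursion (0/0 = 0 convention);
   bspl t r i = B_{i,r}, the i-th B-spline of order r for knot vector t.
   Order-1 splines are indicators of [t_i, t_{i+1}), with the last nonempty
   interval closed at the right end point 1 of the domain [0,1]. *)
fun bspl :: "(nat \<Rightarrow> real) \<Rightarrow> nat \<Rightarrow> nat \<Rightarrow> real \<Rightarrow> real" where
  "bspl t 0 i x = 0"
| "bspl t (Suc 0) i x =
     (if (t i \<le> x \<and> x < t (Suc i)) \<or> (x = 1 \<and> t i < 1 \<and> t (Suc i) = 1) then 1 else 0)"
| "bspl t (Suc (Suc r)) i x =
     (x - t i) / (t (i + Suc r) - t i) * bspl t (Suc r) i x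
   + (t (i + Suc (Suc r)) - x) / (t (i + Suc (Suc r)) - t (Suc i)) * bspl t (Suc r) (Suc i) x"

(* B_m(x), m = 0..N-1, N = k + l: normalized B-spline basis of order l+1 *)
definition Bspline :: "nat \<Rightarrow> nat \<Rightarrow> (nat \<Rightarrow> real) \<Rightarrow> nat \<Rightarrow> real \<Rightarrow> real" where
  "Bspline l k s m x = bspl (ext_knot l k s) (Suc l) m x"

definition lam_max :: "real mat \<Rightarrow> real" where
  "lam_max A = Max {e. eigenvalue A e}"

definition lam_min :: "real mat \<Rightarrow> real" where
  "lam_min A = Min {e. eigenvalue A e}"

end

(* Let D be the difference between the empirical and the population Gram matrix of the basis.
   Each entry of D is the centred mean of n i.i.d. variables bounded by 4^l whose second moment
   is O(1/N), so Bernstein's inequality gives P(|D_ab| >= u) <= 2 exp(-n min(u^2 N, u) / C), and a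
   union bound over the N^2 entries controls the largest entry. A symmetric matrix whose entries
   are below u has all eigenvalues below N u in modulus (Rayleigh quotient and Cauchy-Schwarz),
   and likewise lam_max(E + D) < lam_max(E) + N u. The choices u = 1/N^2 and
   u = c5 n^-tau / N^2 turn the Bernstein exponent into the rates n N^-3 and N^-3 n^(1-2 tau). *)

theory Submission
  imports Defs "Jordan_Normal_Form.Spectral_Radius"
begin

unbundle no inner_syntax and no vec_syntax

section \<open>Extremal eigenvalues of symmetric real matrices\<close>

definition quad_form :: "(nat \<Rightarrow> nat \<Rightarrow> real) \<Rightarrow> nat \<Rightarrow> (nat \<Rightarrow> real) \<Rightarrow> real" where
  "quad_form A d y = (\<Sum>i<d. \<Sum>j<d. A i j * y i * y j)"

lemma quad_form_diff: "quad_form (\<lambda>i j. A i j - B i j) d y = quad_form A d y - quad_form B d y"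
  unfolding quad_form_def by (simp add: algebra_simps sum_subtractf)

lemma quad_form_scale: "quad_form A d (\<lambda>i. c * y i) = c\<^sup>2 * quad_form A d y"
  unfolding quad_form_def by (simp add: sum_distrib_left algebra_simps power2_eq_square)

lemma quad_form_add_basis:
  assumes "k < d" and sym: "\<And>i j. i < d \<Longrightarrow> j < d \<Longrightarrow> A i j = A j i"
  shows "quad_form A d (\<lambda>i. y i + t * (if i = k then 1 else 0))
    = quad_form A d y + 2 * t * (\<Sum>j<d. A k j * y j) + t\<^sup>2 * A k k"
proof -
  have expand: "A i j * (y i + t * (if i = k then 1 else 0)) * (y j + t * (if j = k then 1 else 0))
     = A i j * y i * y j + t * (if j = k then A i j * y i else 0) + t * (if i = k then A i j * y j else 0)
       + t\<^sup>2 * (if i = k then if j = k then A i j else 0 else 0)" for i j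
    by (auto simp: algebra_simps power2_eq_square)
  have column: "(\<Sum>i<d. \<Sum>j<d. if j = k then A i j * y i else 0) = (\<Sum>j<d. A k j * y j)"
    using \<open>k < d\<close> sym by (auto simp: sum.delta intro!: sum.cong)
  have row: "(\<Sum>i<d. \<Sum>j<d. if i = k then A i j * y j else 0) = (\<Sum>j<d. A k j * y j)"
    using \<open>k < d\<close> by (subst sum.swap) (simp add: sum.delta)
  have diagonal: "(\<Sum>i<d. \<Sum>j<d. if i = k then if j = k then A i j else 0 else 0) = A k k"
    using \<open>k < d\<close> by (subst sum.swap) (simp add: sum.delta)
  show ?thesis
    unfolding quad_form_def expand
    by (simp only: sum.distrib sum_distrib_left[symmetric] column row diagonal)
qed

lemma quad_form_attains_max_on_sphere:
  assumes "0 < d"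
  obtains x where "(\<Sum>i<d. (x i)\<^sup>2) = 1"
    and "\<And>y. (\<Sum>i<d. (y i)\<^sup>2) = 1 \<Longrightarrow> quad_form A d y \<le> quad_form A d x"
proof -
  define box where "box = (\<Pi>\<^sub>E i\<in>UNIV. if i < d then {-1..1::real} else {0})"
  define S where "S = box \<inter> {x. (\<Sum>i<d. (x i)\<^sup>2) = 1}"
  have "compactin (product_topology (\<lambda>i. euclidean) UNIV) box"
    unfolding box_def by (subst compactin_PiE) auto
  then have "compact box"
    by (simp add: euclidean_product_topology)
  moreover have "closed {x::nat \<Rightarrow> real. (\<Sum>i<d. (x i)\<^sup>2) = 1}"
    by (intro closed_Collect_eq continuous_intros continuous_on_product_then_coordinatewise
        continuous_on_id)
  ultimately have "compact S"
    unfolding S_def by blast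
  have truncation_in_S: "(\<lambda>i. if i < d then y i else 0) \<in> S" if y: "(\<Sum>i<d. (y i)\<^sup>2) = 1" for y
  proof -
    have "\<bar>y i\<bar> \<le> 1" if "i < d" for i
    proof -
      have "(y i)\<^sup>2 \<le> (\<Sum>i<d. (y i)\<^sup>2)"
        using that by (intro member_le_sum) auto
      then show ?thesis
        using y by (simp add: abs_square_le_1)
    qed
    moreover have "(\<Sum>i<d. (if i < d then y i else 0)\<^sup>2) = 1"
      using y by simp
    ultimately show ?thesis
      by (auto simp: S_def box_def PiE_iff abs_le_iff)
  qed
  have "(\<Sum>i<d. (if i = 0 then 1 else 0::real)\<^sup>2) = (\<Sum>i<d. if i = 0 then 1 else 0)"
    by (intro sum.cong) auto
  then have "S \<noteq> {}"
    using truncation_in_S[of "\<lambda>i. if i = 0 then 1 else 0"] \<open>0 < d\<close> by auto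
  moreover have "continuous_on S (quad_form A d)"
    unfolding quad_form_def
    by (intro continuous_intros continuous_on_product_then_coordinatewise continuous_on_id)
  ultimately obtain x where "x \<in> S" and x_max: "\<And>y. y \<in> S \<Longrightarrow> quad_form A d y \<le> quad_form A d x"
    using continuous_attains_sup[OF \<open>compact S\<close>] by blast
  have truncation_eq: "quad_form A d (\<lambda>i. if i < d then y i else 0) = quad_form A d y" for y
    unfolding quad_form_def by (intro sum.cong) auto
  show thesis
  proof (rule that)
    show "(\<Sum>i<d. (x i)\<^sup>2) = 1"
      using \<open>x \<in> S\<close> by (simp add: S_def)
    show "quad_form A d y \<le> quad_form A d x" if "(\<Sum>i<d. (y i)\<^sup>2) = 1" for y
      using x_max[OF truncation_in_S[OF that]] by (simp only: truncation_eq)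
  qed
qed

lemma quad_form_le_of_sphere_bound:
  assumes sphere_bound: "\<And>y. (\<Sum>i<d. (y i)\<^sup>2) = 1 \<Longrightarrow> quad_form A d y \<le> \<mu>"
  shows "quad_form A d y \<le> \<mu> * (\<Sum>i<d. (y i)\<^sup>2)"
proof (cases "(\<Sum>i<d. (y i)\<^sup>2) = 0")
  case True
  then have "\<forall>i<d. y i = 0"
    by (simp add: sum_nonneg_eq_0_iff)
  then show ?thesis
    by (simp add: quad_form_def)
next
  case False
  define s where "s = (\<Sum>i<d. (y i)\<^sup>2)"
  have "0 < s"
    using False unfolding s_def by (metis sum_nonneg zero_le_power2 order_neq_le_trans)
  define c where "c = 1 / sqrt s"
  have c_sq: "c\<^sup>2 = 1 / s"
    using \<open>0 < s\<close> by (simp add: c_def power_divide)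
  have "(\<Sum>i<d. (c * y i)\<^sup>2) = c\<^sup>2 * s"
    by (simp add: s_def power_mult_distrib sum_distrib_left)
  then have "quad_form A d (\<lambda>i. c * y i) \<le> \<mu>"
    using \<open>0 < s\<close> c_sq by (intro sphere_bound) simp
  then have "quad_form A d y / s \<le> \<mu>"
    using c_sq by (simp add: quad_form_scale)
  then show ?thesis
    using \<open>0 < s\<close> by (simp add: s_def divide_le_eq mult.commute)
qed

lemma linear_plus_quadratic_nonpos_imp_zero:
  fixes a b :: real
  assumes "\<And>t. a * t + b * t\<^sup>2 \<le> 0"
  shows "a = 0"
proof -
  define c where "c = \<bar>b\<bar> + 1"
  have "0 < c" "1 \<le> c + b"
    unfolding c_def by linarith+
  have "a * (a / c) + b * (a / c)\<^sup>2 = a\<^sup>2 * (c + b) / c\<^sup>2"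
    using \<open>0 < c\<close> by (simp add: field_simps power2_eq_square)
  then have "a\<^sup>2 * (c + b) \<le> 0"
    using assms[of "a / c"] \<open>0 < c\<close> by (simp add: divide_le_0_iff)
  moreover have "a\<^sup>2 \<le> a\<^sup>2 * (c + b)"
    using \<open>1 \<le> c + b\<close> by (metis mult.right_neutral mult_left_mono zero_le_power2)
  ultimately have "a\<^sup>2 \<le> 0"
    by linarith
  then show ?thesis
    by simp
qed

text \<open>A maximiser of the quadratic form on the unit sphere is an eigenvector: perturbing it
  along a coordinate direction must not increase the Rayleigh quotient, which kills the linear
  term of the perturbation.\<close>

lemma quad_form_maximizer_eigenvector:
  assumes sym: "\<And>i j. i < d \<Longrightarrow> j < d \<Longrightarrow> A i j = A j i"
    and unit: "(\<Sum>i<d. (x i)\<^sup>2) = 1"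
    and max: "\<And>y. quad_form A d y \<le> quad_form A d x * (\<Sum>i<d. (y i)\<^sup>2)"
    and "k < d"
  shows "(\<Sum>j<d. A k j * x j) = quad_form A d x * x k"
proof -
  let ?\<mu> = "quad_form A d x"
  have "2 * ((\<Sum>j<d. A k j * x j) - ?\<mu> * x k) * t + (A k k - ?\<mu>) * t\<^sup>2 \<le> 0" for t
  proof -
    let ?y = "\<lambda>i. x i + t * (if i = k then 1 else 0)"
    have "(\<Sum>i<d. (?y i)\<^sup>2) = (\<Sum>i<d. (x i)\<^sup>2 + (if i = k then 2 * t * x i + t\<^sup>2 else 0))"
      by (intro sum.cong) (auto simp: power2_eq_square algebra_simps)
    also have "\<dots> = 1 + 2 * t * x k + t\<^sup>2"
      using \<open>k < d\<close> unit by (simp add: sum.distrib sum.delta)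
    finally have "quad_form A d ?y \<le> ?\<mu> * (1 + 2 * t * x k + t\<^sup>2)"
      using max[of ?y] by simp
    then have "?\<mu> + 2 * t * (\<Sum>j<d. A k j * x j) + t\<^sup>2 * A k k \<le> ?\<mu> * (1 + 2 * t * x k + t\<^sup>2)"
      by (simp only: quad_form_add_basis[OF \<open>k < d\<close> sym])
    then show ?thesis
      by (simp add: algebra_simps)
  qed
  then have "2 * ((\<Sum>j<d. A k j * x j) - ?\<mu> * x k) = 0"
    by (rule linear_plus_quadratic_nonpos_imp_zero)
  then show ?thesis
    by simp
qed

lemma scalar_prod_mult_mat_vec_eq_quad_form:
  fixes A :: "real mat"
  assumes "A \<in> carrier_mat d d" and "v \<in> carrier_vec d"
  shows "v \<bullet> (A *\<^sub>v v) = quad_form (\<lambda>i j. A $$ (i, j)) d (\<lambda>i. v $ i)"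
proof -
  have "v \<bullet> (A *\<^sub>v v) = (\<Sum>i<d. v $ i * (\<Sum>j<d. A $$ (i, j) * v $ j))"
    using assms by (auto simp: scalar_prod_def lessThan_atLeast0 intro!: sum.cong)
  then show ?thesis
    unfolding quad_form_def by (simp add: sum_distrib_left algebra_simps)
qed

lemma scalar_prod_self_eq_sum_squares:
  fixes v :: "real vec"
  assumes "v \<in> carrier_vec d"
  shows "v \<bullet> v = (\<Sum>i<d. (v $ i)\<^sup>2)"
  using assms by (auto simp: scalar_prod_def lessThan_atLeast0 power2_eq_square)

lemma scalar_prod_self_pos:
  fixes v :: "real vec"
  assumes "v \<in> carrier_vec d" and "v \<noteq> 0\<^sub>v d"
  shows "0 < v \<bullet> v"
proof -
  obtain i where "i < d" "v $ i \<noteq> 0"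
    using assms by (metis carrier_vecD eq_vecI index_zero_vec(1,2))
  then have "0 < (v $ i)\<^sup>2" "(v $ i)\<^sup>2 \<le> (\<Sum>i<d. (v $ i)\<^sup>2)"
    by (auto intro: member_le_sum)
  then have "0 < (\<Sum>i<d. (v $ i)\<^sup>2)"
    by linarith
  then show ?thesis
    using scalar_prod_self_eq_sum_squares[OF assms(1)] by simp
qed

lemma symmetric_mat_max_eigenvalue:
  fixes A :: "real mat"
  assumes A: "A \<in> carrier_mat d d" and "0 < d"
    and sym: "\<And>i j. i < d \<Longrightarrow> j < d \<Longrightarrow> A $$ (i, j) = A $$ (j, i)"
  obtains \<mu> where "eigenvalue A \<mu>" and "\<And>v. v \<in> carrier_vec d \<Longrightarrow> v \<bullet> (A *\<^sub>v v) \<le> \<mu> * (v \<bullet> v)"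
proof -
  let ?Q = "quad_form (\<lambda>i j. A $$ (i, j)) d"
  obtain x where unit: "(\<Sum>i<d. (x i)\<^sup>2) = 1"
    and x_max: "\<And>y. (\<Sum>i<d. (y i)\<^sup>2) = 1 \<Longrightarrow> ?Q y \<le> ?Q x"
    using quad_form_attains_max_on_sphere[OF \<open>0 < d\<close>] by blast
  have rayleigh: "?Q y \<le> ?Q x * (\<Sum>i<d. (y i)\<^sup>2)" for y
    by (rule quad_form_le_of_sphere_bound[OF x_max])
  define v where "v = vec d x"
  have v: "v \<in> carrier_vec d"
    by (simp add: v_def)
  have "v \<noteq> 0\<^sub>v d"
  proof
    assume "v = 0\<^sub>v d"
    then have "\<forall>i<d. x i = 0"
      unfolding v_def by (metis index_vec index_zero_vec(1))
    with unit show False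
      by simp
  qed
  moreover have "A *\<^sub>v v = ?Q x \<cdot>\<^sub>v v"
  proof (rule eq_vecI)
    fix k assume "k < dim_vec (?Q x \<cdot>\<^sub>v v)"
    then have "k < d"
      by (simp add: v_def)
    have "(A *\<^sub>v v) $ k = (\<Sum>j<d. A $$ (k, j) * x j)"
      using A \<open>k < d\<close> by (auto simp: v_def scalar_prod_def lessThan_atLeast0 intro!: sum.cong)
    also have "\<dots> = ?Q x * x k"
      using quad_form_maximizer_eigenvector[OF sym unit rayleigh \<open>k < d\<close>] .
    finally show "(A *\<^sub>v v) $ k = (?Q x \<cdot>\<^sub>v v) $ k"
      using \<open>k < d\<close> by (simp add: v_def)
  qed (use A in \<open>simp add: v_def\<close>)
  ultimately have "eigenvalue A (?Q x)"
    unfolding eigenvalue_def eigenvector_def using A v by auto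
  moreover have "w \<bullet> (A *\<^sub>v w) \<le> ?Q x * (w \<bullet> w)" if "w \<in> carrier_vec d" for w
    using rayleigh scalar_prod_mult_mat_vec_eq_quad_form[OF A that]
      scalar_prod_self_eq_sum_squares[OF that] by simp
  ultimately show thesis
    by (rule that)
qed

text \<open>\<open>lam_max\<close> and \<open>lam_min\<close> are \<open>Max\<close>/\<open>Min\<close> of the real eigenvalues, which for a general real
  matrix may form an empty set; symmetry supplies one.\<close>

lemma symmetric_mat_lam_max:
  fixes A :: "real mat"
  assumes A: "A \<in> carrier_mat d d" and "0 < d"
    and sym: "\<And>i j. i < d \<Longrightarrow> j < d \<Longrightarrow> A $$ (i, j) = A $$ (j, i)"
  shows "eigenvalue A (lam_max A)" and "eigenvalue A (lam_min A)"
    and "\<And>v. v \<in> carrier_vec d \<Longrightarrow> v \<bullet> (A *\<^sub>v v) \<le> lam_max A * (v \<bullet> v)"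
proof -
  obtain \<mu> where \<mu>: "eigenvalue A \<mu>" and rayleigh: "\<And>v. v \<in> carrier_vec d \<Longrightarrow> v \<bullet> (A *\<^sub>v v) \<le> \<mu> * (v \<bullet> v)"
    using symmetric_mat_max_eigenvalue[OF assms] by blast
  have fin: "finite {e. eigenvalue A e}"
    using card_finite_spectrum(1)[OF A] by (simp add: spectrum_def)
  have ne: "{e. eigenvalue A e} \<noteq> {}"
    using \<mu> by auto
  show "eigenvalue A (lam_max A)" "eigenvalue A (lam_min A)"
    unfolding lam_max_def lam_min_def using Max_in[OF fin ne] Min_in[OF fin ne] by simp_all
  fix v :: "real vec" assume v: "v \<in> carrier_vec d"
  have "\<mu> \<le> lam_max A"
    unfolding lam_max_def using fin \<mu> by (intro Max_ge) auto
  moreover have "0 \<le> v \<bullet> v"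
    using scalar_prod_self_eq_sum_squares[OF v] by (simp add: sum_nonneg)
  ultimately have "\<mu> * (v \<bullet> v) \<le> lam_max A * (v \<bullet> v)"
    by (rule mult_right_mono)
  then show "v \<bullet> (A *\<^sub>v v) \<le> lam_max A * (v \<bullet> v)"
    using rayleigh[OF v] by linarith
qed

lemma abs_quad_form_le:
  assumes "\<And>i j. i < d \<Longrightarrow> j < d \<Longrightarrow> \<bar>B i j\<bar> \<le> m"
  shows "\<bar>quad_form B d y\<bar> \<le> real d * m * (\<Sum>i<d. (y i)\<^sup>2)"
proof (cases "d = 0")
  case False
  then have "0 \<le> m"
    using assms[of 0 0] by auto
  have "\<bar>quad_form B d y\<bar> \<le> (\<Sum>i<d. \<Sum>j<d. \<bar>B i j * y i * y j\<bar>)"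
    unfolding quad_form_def by (rule order_trans[OF sum_abs]) (intro sum_mono sum_abs)
  also have "\<dots> \<le> (\<Sum>i<d. \<Sum>j<d. m * (\<bar>y i\<bar> * \<bar>y j\<bar>))"
    by (intro sum_mono) (simp add: abs_mult mult.assoc mult_right_mono assms)
  also have "\<dots> = m * (\<Sum>i<d. \<bar>y i\<bar>)\<^sup>2"
    unfolding power2_eq_square sum_product by (simp add: sum_distrib_left)
  also have "\<dots> \<le> m * ((\<Sum>i<d. \<bar>y i\<bar>\<^sup>2) * real d)"
    using sum_squared_le_sum_of_squares[of "\<lambda>i. \<bar>y i\<bar>" "{..<d}"] \<open>0 \<le> m\<close>
    by (intro mult_left_mono) auto
  finally show ?thesis
    by (simp add: power2_abs mult_ac)
qed (simp add: quad_form_def)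

lemma eigenvalue_imp_rayleigh:
  fixes A :: "real mat"
  assumes "A \<in> carrier_mat d d" and "eigenvalue A e"
  obtains v where "v \<in> carrier_vec d" and "0 < v \<bullet> v" and "v \<bullet> (A *\<^sub>v v) = e * (v \<bullet> v)"
proof -
  obtain v where v: "v \<in> carrier_vec d" "v \<noteq> 0\<^sub>v d" and "A *\<^sub>v v = e \<cdot>\<^sub>v v"
    using assms unfolding eigenvalue_def eigenvector_def by auto
  show thesis
  proof (rule that[OF v(1) scalar_prod_self_pos[OF v]])
    show "v \<bullet> (A *\<^sub>v v) = e * (v \<bullet> v)"
      using \<open>A *\<^sub>v v = e \<cdot>\<^sub>v v\<close> v(1) by simp
  qed
qed

lemma abs_eigenvalue_le:
  fixes D :: "real mat"
  assumes D: "D \<in> carrier_mat d d" and "eigenvalue D e"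
    and entries: "\<And>i j. i < d \<Longrightarrow> j < d \<Longrightarrow> \<bar>D $$ (i, j)\<bar> \<le> m"
  shows "\<bar>e\<bar> \<le> real d * m"
proof -
  obtain v where v: "v \<in> carrier_vec d" and pos: "0 < v \<bullet> v"
    and eq: "v \<bullet> (D *\<^sub>v v) = e * (v \<bullet> v)"
    using eigenvalue_imp_rayleigh[OF assms(1,2)] .
  have "\<bar>e\<bar> * (v \<bullet> v) = \<bar>quad_form (\<lambda>i j. D $$ (i, j)) d (\<lambda>i. v $ i)\<bar>"
    using eq scalar_prod_mult_mat_vec_eq_quad_form[OF D v] pos by (simp add: abs_mult)
  also have "\<dots> \<le> real d * m * (v \<bullet> v)"
    using abs_quad_form_le[of d "\<lambda>i j. D $$ (i, j)" m] entries scalar_prod_self_eq_sum_squares[OF v]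
    by simp
  finally show ?thesis
    using pos by simp
qed

lemma lam_max_le_of_entries_close:
  fixes P E :: "real mat"
  assumes P: "P \<in> carrier_mat d d" and E: "E \<in> carrier_mat d d" and "0 < d"
    and symP: "\<And>i j. i < d \<Longrightarrow> j < d \<Longrightarrow> P $$ (i, j) = P $$ (j, i)"
    and symE: "\<And>i j. i < d \<Longrightarrow> j < d \<Longrightarrow> E $$ (i, j) = E $$ (j, i)"
    and close: "\<And>i j. i < d \<Longrightarrow> j < d \<Longrightarrow> \<bar>P $$ (i, j) - E $$ (i, j)\<bar> \<le> m"
  shows "lam_max P \<le> lam_max E + real d * m"
proof -
  obtain v where v: "v \<in> carrier_vec d" and pos: "0 < v \<bullet> v"
    and eq: "v \<bullet> (P *\<^sub>v v) = lam_max P * (v \<bullet> v)"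
    using eigenvalue_imp_rayleigh[OF P symmetric_mat_lam_max(1)[OF P \<open>0 < d\<close> symP]] .
  let ?y = "\<lambda>i. v $ i"
  have "v \<bullet> (P *\<^sub>v v) = v \<bullet> (E *\<^sub>v v) + quad_form (\<lambda>i j. P $$ (i, j) - E $$ (i, j)) d ?y"
    unfolding quad_form_diff scalar_prod_mult_mat_vec_eq_quad_form[OF P v]
      scalar_prod_mult_mat_vec_eq_quad_form[OF E v] by simp
  also have "\<dots> \<le> lam_max E * (v \<bullet> v) + real d * m * (v \<bullet> v)"
  proof (rule add_mono)
    show "v \<bullet> (E *\<^sub>v v) \<le> lam_max E * (v \<bullet> v)"
      by (rule symmetric_mat_lam_max(3)[OF E \<open>0 < d\<close> symE v])
    have "\<bar>quad_form (\<lambda>i j. P $$ (i, j) - E $$ (i, j)) d ?y\<bar> \<le> real d * m * (v \<bullet> v)"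
      using abs_quad_form_le[of d "\<lambda>i j. P $$ (i, j) - E $$ (i, j)" m] close
        scalar_prod_self_eq_sum_squares[OF v] by simp
    then show "quad_form (\<lambda>i j. P $$ (i, j) - E $$ (i, j)) d ?y \<le> real d * m * (v \<bullet> v)"
      by (rule abs_le_D1)
  qed
  finally have "lam_max P * (v \<bullet> v) \<le> (lam_max E + real d * m) * (v \<bullet> v)"
    unfolding eq by (simp only: distrib_right)
  then show ?thesis
    using pos by (rule mult_right_le_imp_le)
qed

lemma ex_less_uniform_bound:
  fixes g :: "nat \<Rightarrow> nat \<Rightarrow> real"
  assumes less: "\<And>i j. i < d \<Longrightarrow> j < d \<Longrightarrow> g i j < u"
  obtains m where "m < u" and "\<And>i j. i < d \<Longrightarrow> j < d \<Longrightarrow> g i j \<le> m"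
proof -
  define S where "S = insert (u - 1) (case_prod g ` ({..<d} \<times> {..<d}))"
  have "finite S"
    by (simp add: S_def)
  then have "Max S \<in> S"
    by (intro Max_in) (auto simp: S_def)
  then have "Max S < u"
    using less by (auto simp: S_def)
  moreover have "g i j \<le> Max S" if "i < d" "j < d" for i j
    using \<open>finite S\<close> that by (intro Max_ge) (auto simp: S_def)
  ultimately show thesis
    by (rule that)
qed

lemma lam_max_less_of_entries_close:
  fixes P E :: "real mat"
  assumes "P \<in> carrier_mat d d" and "E \<in> carrier_mat d d" and "0 < d"
    and "\<And>i j. i < d \<Longrightarrow> j < d \<Longrightarrow> P $$ (i, j) = P $$ (j, i)"
    and "\<And>i j. i < d \<Longrightarrow> j < d \<Longrightarrow> E $$ (i, j) = E $$ (j, i)"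
    and "\<And>i j. i < d \<Longrightarrow> j < d \<Longrightarrow> \<bar>P $$ (i, j) - E $$ (i, j)\<bar> < u"
  shows "lam_max P < lam_max E + real d * u"
proof -
  obtain m where "m < u" and m: "\<And>i j. i < d \<Longrightarrow> j < d \<Longrightarrow> \<bar>P $$ (i, j) - E $$ (i, j)\<bar> \<le> m"
    using ex_less_uniform_bound[of d "\<lambda>i j. \<bar>P $$ (i, j) - E $$ (i, j)\<bar>" u] assms(6) by blast
  have "lam_max P \<le> lam_max E + real d * m"
    by (rule lam_max_le_of_entries_close[OF assms(1-5) m])
  also have "\<dots> < lam_max E + real d * u"
    using \<open>m < u\<close> \<open>0 < d\<close> by simp
  finally show ?thesis .
qed

lemma extreme_eigenvalues_less_of_entries_small:
  fixes D :: "real mat"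
  assumes D: "D \<in> carrier_mat d d" and "0 < d"
    and sym: "\<And>i j. i < d \<Longrightarrow> j < d \<Longrightarrow> D $$ (i, j) = D $$ (j, i)"
    and small: "\<And>i j. i < d \<Longrightarrow> j < d \<Longrightarrow> \<bar>D $$ (i, j)\<bar> < u"
  shows "max \<bar>lam_max D\<bar> \<bar>lam_min D\<bar> < real d * u"
proof -
  obtain m where "m < u" and m: "\<And>i j. i < d \<Longrightarrow> j < d \<Longrightarrow> \<bar>D $$ (i, j)\<bar> \<le> m"
    using ex_less_uniform_bound[of d "\<lambda>i j. \<bar>D $$ (i, j)\<bar>" u] small by blast
  have "real d * m < real d * u"
    using \<open>m < u\<close> \<open>0 < d\<close> by simp
  moreover have "\<bar>lam_max D\<bar> \<le> real d * m" "\<bar>lam_min D\<bar> \<le> real d * m"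
    using symmetric_mat_lam_max(1,2)[OF D \<open>0 < d\<close> sym] by (auto intro: abs_eigenvalue_le[OF D _ m])
  ultimately show ?thesis
    unfolding max_less_iff_conj by linarith
qed

section \<open>Uniform bound on the B-spline basis\<close>

lemma bspl_Suc_measurable [measurable]: "bspl t (Suc r) i \<in> borel_measurable borel"
proof (induction r arbitrary: i)
  case (Suc r)
  note [measurable] = Suc.IH
  show ?case
    by simp
next
  case 0
  have "bspl t (Suc 0) i = (\<lambda>x. if t i \<le> x \<and> x < t (Suc i) \<or> x = 1 \<and> t i < 1 \<and> t (Suc i) = 1 then 1 else 0)"
    by (rule ext) simp
  then show ?case
    by simp
qed

lemma bspl_nonzero_imp_in_support:
  assumes "mono t" and "bspl t (Suc r) i x \<noteq> 0"
  shows "t i \<le> x \<and> x \<le> t (i + Suc r)"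
  using assms(2)
proof (induction r arbitrary: i)
  case (Suc r)
  then have "bspl t (Suc r) i x \<noteq> 0 \<or> bspl t (Suc r) (Suc i) x \<noteq> 0"
    by auto
  moreover have "t i \<le> t (Suc i)" "t (i + Suc r) \<le> t (i + Suc (Suc r))"
    using \<open>mono t\<close> by (auto intro: monoD)
  ultimately show ?case
    using Suc.IH[of i] Suc.IH[of "Suc i"] by auto
qed (auto split: if_splits)

lemma divide_in_unit_interval:
  fixes a b :: real
  assumes "0 \<le> a" and "a \<le> b"
  shows "0 \<le> a / b \<and> a / b \<le> 1"
  using assms by (cases "b = 0") (auto simp: divide_le_eq_1)

lemma abs_weight_mult_le:
  fixes w b c :: real
  assumes "b \<noteq> 0 \<Longrightarrow> 0 \<le> w \<and> w \<le> 1" and "\<bar>b\<bar> \<le> c"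
  shows "\<bar>w * b\<bar> \<le> c"
proof (cases "b = 0")
  case False
  then have "\<bar>w\<bar> * \<bar>b\<bar> \<le> 1 * c"
    using assms by (intro mult_mono) auto
  then show ?thesis
    by (simp add: abs_mult)
qed (use assms in simp)

text \<open>Each recursion step of Cox--de Boor takes two convex weights on the supports of the
  lower-order splines, so the crude bound doubles with the order.\<close>

lemma bspl_abs_le:
  assumes "mono t"
  shows "\<bar>bspl t (Suc r) i x\<bar> \<le> 2 ^ r"
proof (induction r arbitrary: i)
  case (Suc r)
  let ?w1 = "(x - t i) / (t (i + Suc r) - t i)"
  let ?w2 = "(t (i + Suc (Suc r)) - x) / (t (i + Suc (Suc r)) - t (Suc i))"
  have "\<bar>?w1 * bspl t (Suc r) i x\<bar> \<le> 2 ^ r"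
    using bspl_nonzero_imp_in_support[OF \<open>mono t\<close>, of r i x] divide_in_unit_interval
    by (intro abs_weight_mult_le Suc.IH) force
  moreover have "\<bar>?w2 * bspl t (Suc r) (Suc i) x\<bar> \<le> 2 ^ r"
    using bspl_nonzero_imp_in_support[OF \<open>mono t\<close>, of r "Suc i" x] divide_in_unit_interval
    by (intro abs_weight_mult_le Suc.IH) force
  moreover have "\<bar>?w1 * bspl t (Suc r) i x + ?w2 * bspl t (Suc r) (Suc i) x\<bar>
      \<le> \<bar>?w1 * bspl t (Suc r) i x\<bar> + \<bar>?w2 * bspl t (Suc r) (Suc i) x\<bar>"
    by (rule abs_triangle_ineq)
  ultimately have "\<bar>?w1 * bspl t (Suc r) i x + ?w2 * bspl t (Suc r) (Suc i) x\<bar> \<le> 2 ^ r + 2 ^ r"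
    by (meson add_mono order_trans)
  then show ?case
    by simp
qed simp

lemma knots_mono:
  fixes s :: "nat \<Rightarrow> real"
  assumes "\<And>i. i < k \<Longrightarrow> s i < s (Suc i)" and "i \<le> j" and "j \<le> k"
  shows "s i \<le> s j"
  using assms(2,3)
proof (induction j)
  case (Suc j)
  show ?case
  proof (cases "i = Suc j")
    case False
    then have "s i \<le> s j"
      using Suc by simp
    also have "s j \<le> s (Suc j)"
      using assms(1)[of j] Suc.prems by simp
    finally show ?thesis .
  qed simp
qed simp

lemma ext_knot_mono:
  fixes s :: "nat \<Rightarrow> real"
  assumes "1 \<le> k" and "s 0 = 0" and "s k = 1" and inc: "\<And>i. i < k \<Longrightarrow> s i < s (Suc i)"
  shows "mono (ext_knot l k s)"
proof (rule incseq_SucI)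
  fix i
  have "0 \<le> s j \<and> s j \<le> 1" if "j \<le> k" for j
    using knots_mono[where s = s and k = k, OF inc] that assms(2,3) by (metis le0 order_refl)
  then show "ext_knot l k s i \<le> ext_knot l k s (Suc i)"
    unfolding ext_knot_def using knots_mono[where s = s and k = k and i = "i - l" and j = "Suc i - l", OF inc] \<open>1 \<le> k\<close>
    by (auto simp: Suc_diff_le)
qed

lemma Bspline_abs_le:
  fixes s :: "nat \<Rightarrow> real"
  assumes "1 \<le> k" and "s 0 = 0" and "s k = 1" and "\<And>i. i < k \<Longrightarrow> s i < s (Suc i)"
  shows "\<bar>Bspline l k s m x\<bar> \<le> 2 ^ l"
  unfolding Bspline_def by (rule bspl_abs_le[OF ext_knot_mono[OF assms]])

lemma Bspline_measurable [measurable]: "Bspline l k s m \<in> borel_measurable borel"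
  unfolding Bspline_def by simp

section \<open>Bernstein's inequality for bounded independent variables\<close>

definition bernstein_exponent :: "real \<Rightarrow> real \<Rightarrow> real \<Rightarrow> real" where
  "bernstein_exponent C V u = min (u\<^sup>2 / (4 * V)) (u / (4 * C))"

lemma exp_le_one_plus_plus_square:
  fixes z :: real
  assumes "\<bar>z\<bar> \<le> 1"
  shows "exp z \<le> 1 + z + z\<^sup>2"
proof (cases "0 \<le> z")
  case True
  then show ?thesis
    using assms exp_bound by simp
next
  case False
  define y where "y = - z"
  have "0 < y" "y \<le> 1"
    using False assms by (auto simp: y_def)
  have "1 \<le> 1 + y ^ 3"
    using \<open>0 < y\<close> by simp
  also have "1 + y ^ 3 = (1 - y + y\<^sup>2) * (1 + y)"
    by (simp add: algebra_simps power2_eq_square power3_eq_cube)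
  also have "\<dots> \<le> (1 - y + y\<^sup>2) * exp y"
  proof (rule mult_left_mono)
    have "0 \<le> y\<^sup>2"
      by simp
    then show "0 \<le> 1 - y + y\<^sup>2"
      using \<open>y \<le> 1\<close> by linarith
  qed simp
  finally have "exp (- y) \<le> 1 - y + y\<^sup>2"
    by (simp add: exp_minus field_simps)
  then show ?thesis
    by (simp add: y_def)
qed

lemma (in finite_measure) integrable_bounded_real:
  fixes f :: "'a \<Rightarrow> real"
  assumes "f \<in> borel_measurable M" and "\<And>x. x \<in> space M \<Longrightarrow> \<bar>f x\<bar> \<le> B"
  shows "integrable M f"
  using assms by (intro integrable_const_bound[where B = B]) auto

lemma (in prob_space) nn_integral_exp_le_of_centered:
  fixes Z :: "'a \<Rightarrow> real"
  assumes [measurable]: "Z \<in> borel_measurable M"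
    and bounded: "\<And>\<omega>. \<omega> \<in> space M \<Longrightarrow> \<bar>Z \<omega>\<bar> \<le> R"
    and centered: "expectation Z = 0"
    and second_moment: "expectation (\<lambda>\<omega>. (Z \<omega>)\<^sup>2) \<le> V"
    and "0 < \<theta>" and "\<theta> * R \<le> 1"
  shows "(\<integral>\<^sup>+\<omega>. ennreal (exp (\<theta> * Z \<omega>)) \<partial>M) \<le> ennreal (exp (\<theta>\<^sup>2 * V))"
proof -
  have small: "\<bar>\<theta> * Z \<omega>\<bar> \<le> 1" if "\<omega> \<in> space M" for \<omega>
  proof -
    have "\<theta> * \<bar>Z \<omega>\<bar> \<le> \<theta> * R"
      using bounded[OF that] \<open>0 < \<theta>\<close> by (intro mult_left_mono) auto
    moreover have "\<bar>\<theta> * Z \<omega>\<bar> = \<theta> * \<bar>Z \<omega>\<bar>"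
      using \<open>0 < \<theta>\<close> by (simp add: abs_mult)
    ultimately show ?thesis
      using \<open>\<theta> * R \<le> 1\<close> by linarith
  qed
  have int_Z: "integrable M Z"
    by (rule integrable_bounded_real[OF _ bounded]) measurable
  have "\<bar>(Z \<omega>)\<^sup>2\<bar> \<le> R\<^sup>2" if "\<omega> \<in> space M" for \<omega>
    using bounded[OF that] abs_ge_self[of R] by (simp add: abs_le_square_iff[symmetric])
  then have int_Z2: "integrable M (\<lambda>\<omega>. (Z \<omega>)\<^sup>2)"
    by (intro integrable_bounded_real) auto
  have "\<bar>exp (\<theta> * Z \<omega>)\<bar> \<le> exp 1" if "\<omega> \<in> space M" for \<omega>
    using abs_le_D1[OF small[OF that]] by simp
  then have int_exp: "integrable M (\<lambda>\<omega>. exp (\<theta> * Z \<omega>))"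
    by (intro integrable_bounded_real) auto
  have "(\<integral>\<^sup>+\<omega>. ennreal (exp (\<theta> * Z \<omega>)) \<partial>M) = ennreal (expectation (\<lambda>\<omega>. exp (\<theta> * Z \<omega>)))"
    using int_exp by (rule nn_integral_eq_integral) auto
  also have "expectation (\<lambda>\<omega>. exp (\<theta> * Z \<omega>)) \<le> expectation (\<lambda>\<omega>. 1 + \<theta> * Z \<omega> + \<theta>\<^sup>2 * (Z \<omega>)\<^sup>2)"
    using int_exp int_Z int_Z2 exp_le_one_plus_plus_square[OF small]
    by (intro integral_mono) (auto simp: power_mult_distrib)
  also have "\<dots> = 1 + \<theta>\<^sup>2 * expectation (\<lambda>\<omega>. (Z \<omega>)\<^sup>2)"
    using int_Z int_Z2 centered prob_space by simp
  also have "\<dots> \<le> 1 + \<theta>\<^sup>2 * V"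
    using second_moment by (simp add: mult_left_mono)
  also have "\<dots> \<le> exp (\<theta>\<^sup>2 * V)"
    by (rule exp_ge_add_one_self)
  finally show ?thesis
    by (simp add: ennreal_leI)
qed

lemma (in prob_space) bernstein_upper_tail:
  fixes Z :: "nat \<Rightarrow> 'a \<Rightarrow> real"
  assumes indep: "indep_vars (\<lambda>_. borel) Z {..<n}"
    and bounded: "\<And>i \<omega>. i < n \<Longrightarrow> \<omega> \<in> space M \<Longrightarrow> \<bar>Z i \<omega>\<bar> \<le> R"
    and centered: "\<And>i. i < n \<Longrightarrow> expectation (Z i) = 0"
    and second_moment: "\<And>i. i < n \<Longrightarrow> expectation (\<lambda>\<omega>. (Z i \<omega>)\<^sup>2) \<le> V"
    and "0 < \<theta>" and "\<theta> * R \<le> 1"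
  shows "prob {\<omega> \<in> space M. \<epsilon> \<le> (\<Sum>i<n. Z i \<omega>)} \<le> exp (- \<theta> * \<epsilon> + real n * \<theta>\<^sup>2 * V)"
proof -
  have [measurable]: "Z i \<in> borel_measurable M" if "i < n" for i
    using indep that unfolding indep_vars_def by auto
  have "ennreal (prob {\<omega> \<in> space M. \<epsilon> \<le> (\<Sum>i<n. Z i \<omega>)})
      = emeasure M {\<omega> \<in> space M. \<epsilon> \<le> (\<Sum>i<n. Z i \<omega>)}"
    by (simp add: emeasure_eq_measure)
  also have "\<dots> \<le> ennreal (exp (- \<theta> * \<epsilon>)) * (\<integral>\<^sup>+\<omega>\<in>space M. exp (\<theta> * (\<Sum>i<n. Z i \<omega>)) \<partial>M)"
    using \<open>0 < \<theta>\<close> by (intro Chernoff_ineq_nn_integral_ge) auto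
  also have "(\<integral>\<^sup>+\<omega>\<in>space M. exp (\<theta> * (\<Sum>i<n. Z i \<omega>)) \<partial>M)
      = (\<integral>\<^sup>+\<omega>. (\<Prod>i<n. ennreal (exp (\<theta> * Z i \<omega>))) \<partial>M)"
    by (intro nn_integral_cong) (simp add: sum_distrib_left exp_sum prod_ennreal)
  also have "\<dots> = (\<Prod>i<n. \<integral>\<^sup>+\<omega>. ennreal (exp (\<theta> * Z i \<omega>)) \<partial>M)"
    by (intro indep_vars_nn_integral indep_vars_compose2[OF indep]) auto
  also have "ennreal (exp (- \<theta> * \<epsilon>)) * \<dots> \<le> ennreal (exp (- \<theta> * \<epsilon>)) * (\<Prod>i<n. ennreal (exp (\<theta>\<^sup>2 * V)))"
    using bounded centered second_moment \<open>0 < \<theta>\<close> \<open>\<theta> * R \<le> 1\<close>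
    by (intro mult_left_mono prod_mono_ennreal nn_integral_exp_le_of_centered) auto
  also have "\<dots> = ennreal (exp (- \<theta> * \<epsilon>) * exp (\<theta>\<^sup>2 * V) ^ n)"
    by (simp add: prod_ennreal ennreal_mult[symmetric] ennreal_power)
  also have "exp (\<theta>\<^sup>2 * V) ^ n = exp (real n * (\<theta>\<^sup>2 * V))"
    by (rule exp_of_nat_mult[symmetric])
  also have "exp (- \<theta> * \<epsilon>) * exp (real n * (\<theta>\<^sup>2 * V)) = exp (- \<theta> * \<epsilon> + real n * \<theta>\<^sup>2 * V)"
    by (simp add: mult.assoc flip: exp_add)
  finally show ?thesis
    by (subst (asm) ennreal_le_iff) simp_all
qed

lemma bernstein_exponent_le:
  assumes "0 < C" and "0 < V" and "0 < u"
  defines "\<theta> \<equiv> min (u / (2 * V)) (1 / (2 * C))"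
  shows "- \<theta> * u + \<theta>\<^sup>2 * V \<le> - bernstein_exponent C V u"
proof -
  have "\<theta> * V \<le> u / 2" "0 < \<theta>"
    using assms by (auto simp: \<theta>_def min_def field_simps)
  then have "\<theta>\<^sup>2 * V \<le> \<theta> * (u / 2)"
    by (simp add: power2_eq_square mult.assoc mult_left_mono)
  moreover have "\<theta> * u / 2 = bernstein_exponent C V u"
    using assms by (auto simp: \<theta>_def bernstein_exponent_def min_def field_simps power2_eq_square)
  ultimately show ?thesis
    by simp
qed

text \<open>The variables are centred at their common mean, whose modulus is at most the bound \<open>C\<close>;
  the variance is at most the second moment.\<close>

lemma (in prob_space) bernstein_two_sided:
  fixes Y :: "nat \<Rightarrow> 'a \<Rightarrow> real"
  assumes indep: "indep_vars (\<lambda>_. borel) Y {..<n}" and "0 < n"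
    and bounded: "\<And>i \<omega>. i < n \<Longrightarrow> \<omega> \<in> space M \<Longrightarrow> \<bar>Y i \<omega>\<bar> \<le> C"
    and mean: "\<And>i. i < n \<Longrightarrow> expectation (Y i) = \<mu>"
    and second_moment: "\<And>i. i < n \<Longrightarrow> expectation (\<lambda>\<omega>. (Y i \<omega>)\<^sup>2) \<le> V"
    and "0 < C" and "0 < V" and "0 < u"
  shows "prob {\<omega> \<in> space M. u \<le> \<bar>(1 / real n) * (\<Sum>i<n. Y i \<omega>) - \<mu>\<bar>}
    \<le> 2 * exp (- real n * bernstein_exponent C V u)"
proof -
  have meas: "Y i \<in> borel_measurable M" if "i < n" for i
    using indep that unfolding indep_vars_def by auto
  have int_Y: "integrable M (Y i)" if "i < n" for i
    using meas[OF that] bounded[OF that] by (rule integrable_bounded_real)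
  have int_Y2: "integrable M (\<lambda>\<omega>. (Y i \<omega>)\<^sup>2)" if "i < n" for i
  proof (rule integrable_bounded_real[where B = "C\<^sup>2"])
    show "(\<lambda>\<omega>. (Y i \<omega>)\<^sup>2) \<in> borel_measurable M"
      using meas[OF that] by measurable
    show "\<bar>(Y i \<omega>)\<^sup>2\<bar> \<le> C\<^sup>2" if "\<omega> \<in> space M" for \<omega>
      using bounded[OF \<open>i < n\<close> that] \<open>0 < C\<close> by (simp add: abs_le_square_iff[symmetric])
  qed
  have "\<bar>\<mu>\<bar> \<le> C"
  proof -
    have "\<bar>\<mu>\<bar> = \<bar>expectation (Y 0)\<bar>"
      using mean[OF \<open>0 < n\<close>] by simp
    also have "\<dots> \<le> expectation (\<lambda>\<omega>. \<bar>Y 0 \<omega>\<bar>)"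
      by (rule integral_abs_bound)
    also have "\<dots> \<le> expectation (\<lambda>\<omega>. C)"
      using int_Y[OF \<open>0 < n\<close>] bounded[OF \<open>0 < n\<close>] by (intro integral_mono integrable_abs) auto
    also have "\<dots> = C"
      using prob_space by simp
    finally show ?thesis .
  qed
  have centered_moment: "expectation (\<lambda>\<omega>. (Y i \<omega> - \<mu>)\<^sup>2) \<le> V" if "i < n" for i
  proof -
    have "expectation (\<lambda>\<omega>. (Y i \<omega> - \<mu>)\<^sup>2) = expectation (\<lambda>\<omega>. (Y i \<omega>)\<^sup>2) - \<mu>\<^sup>2"
      using variance_eq[OF int_Y[OF that] int_Y2[OF that]] mean[OF that] by simp
    also have "\<dots> \<le> V"
      using second_moment[OF that] zero_le_power2[of \<mu>] by linarith
    finally show ?thesis .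
  qed
  define \<theta> where "\<theta> = min (u / (2 * V)) (1 / (2 * C))"
  have "0 < \<theta>" "\<theta> * (2 * C) \<le> 1"
    using assms by (auto simp: \<theta>_def min_def field_simps)
  have exponent: "- \<theta> * (real n * u) + real n * \<theta>\<^sup>2 * V \<le> - real n * bernstein_exponent C V u"
    using mult_left_mono[OF bernstein_exponent_le[OF \<open>0 < C\<close> \<open>0 < V\<close> \<open>0 < u\<close>], of "real n"]
    by (simp add: \<theta>_def algebra_simps)
  have tail: "prob {\<omega> \<in> space M. real n * u \<le> (\<Sum>i<n. \<sigma> * (Y i \<omega> - \<mu>))}
      \<le> exp (- real n * bernstein_exponent C V u)" if "\<bar>\<sigma>\<bar> = 1" for \<sigma>
  proof -
    have "prob {\<omega> \<in> space M. real n * u \<le> (\<Sum>i<n. \<sigma> * (Y i \<omega> - \<mu>))}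
        \<le> exp (- \<theta> * (real n * u) + real n * \<theta>\<^sup>2 * V)"
    proof (rule bernstein_upper_tail[OF _ _ _ _ \<open>0 < \<theta>\<close> \<open>\<theta> * (2 * C) \<le> 1\<close>])
      show "indep_vars (\<lambda>_. borel) (\<lambda>i \<omega>. \<sigma> * (Y i \<omega> - \<mu>)) {..<n}"
        by (rule indep_vars_compose2[OF indep, of "\<lambda>i y. \<sigma> * (y - \<mu>)"]) simp
      show "\<bar>\<sigma> * (Y i \<omega> - \<mu>)\<bar> \<le> 2 * C" if "i < n" "\<omega> \<in> space M" for i \<omega>
        using bounded[OF that] \<open>\<bar>\<mu>\<bar> \<le> C\<close> \<open>\<bar>\<sigma>\<bar> = 1\<close> by (simp add: abs_mult)
      show "expectation (\<lambda>\<omega>. \<sigma> * (Y i \<omega> - \<mu>)) = 0" if "i < n" for i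
        using int_Y[OF that] mean[OF that] prob_space by simp
      have "\<sigma>\<^sup>2 = 1"
        using \<open>\<bar>\<sigma>\<bar> = 1\<close> by (metis power2_abs power_one)
      then show "expectation (\<lambda>\<omega>. (\<sigma> * (Y i \<omega> - \<mu>))\<^sup>2) \<le> V" if "i < n" for i
        using centered_moment[OF that] by (simp add: power_mult_distrib)
    qed
    also have "\<dots> \<le> exp (- real n * bernstein_exponent C V u)"
      using exponent by simp
    finally show ?thesis .
  qed
  have sum_measurable [measurable]: "(\<lambda>\<omega>. \<Sum>i<n. \<sigma> * (Y i \<omega> - \<mu>)) \<in> borel_measurable M" for \<sigma>
  proof (rule borel_measurable_sum)
    fix i assume "i \<in> {..<n}"
    then have [measurable]: "Y i \<in> borel_measurable M"
      using meas by simp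
    show "(\<lambda>\<omega>. \<sigma> * (Y i \<omega> - \<mu>)) \<in> borel_measurable M"
      by measurable
  qed
  have "u \<le> \<bar>(1 / real n) * (\<Sum>i<n. Y i \<omega>) - \<mu>\<bar> \<longleftrightarrow>
      real n * u \<le> (\<Sum>i<n. 1 * (Y i \<omega> - \<mu>)) \<or> real n * u \<le> (\<Sum>i<n. - 1 * (Y i \<omega> - \<mu>))" for \<omega>
  proof -
    have "(1 / real n) * (\<Sum>i<n. Y i \<omega>) - \<mu> = (\<Sum>i<n. 1 * (Y i \<omega> - \<mu>)) / real n"
      using \<open>0 < n\<close> by (simp add: sum_subtractf field_simps)
    moreover have "(\<Sum>i<n. - 1 * (Y i \<omega> - \<mu>)) = - (\<Sum>i<n. 1 * (Y i \<omega> - \<mu>))"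
      by (simp add: sum_subtractf)
    moreover have "u \<le> \<bar>S / real n\<bar> \<longleftrightarrow> real n * u \<le> \<bar>S\<bar>" for S
      using \<open>0 < n\<close> by (simp add: pos_le_divide_eq mult.commute)
    ultimately show ?thesis
      by (simp only:) arith
  qed
  then have "prob {\<omega> \<in> space M. u \<le> \<bar>(1 / real n) * (\<Sum>i<n. Y i \<omega>) - \<mu>\<bar>}
      = prob ({\<omega> \<in> space M. real n * u \<le> (\<Sum>i<n. 1 * (Y i \<omega> - \<mu>))}
        \<union> {\<omega> \<in> space M. real n * u \<le> (\<Sum>i<n. - 1 * (Y i \<omega> - \<mu>))})"
    by (intro arg_cong[where f = prob]) auto
  also have "\<dots> \<le> prob {\<omega> \<in> space M. real n * u \<le> (\<Sum>i<n. 1 * (Y i \<omega> - \<mu>))}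
        + prob {\<omega> \<in> space M. real n * u \<le> (\<Sum>i<n. - 1 * (Y i \<omega> - \<mu>))}"
    by (intro measure_Un_le) measurable
  also have "\<dots> \<le> 2 * exp (- real n * bernstein_exponent C V u)"
    using tail[of 1] tail[of "- 1"] by simp
  finally show ?thesis .
qed

section \<open>Concentration of Gram matrices of bounded bases\<close>

definition empirical_gram ::
    "nat \<Rightarrow> (nat \<Rightarrow> real \<Rightarrow> real) \<Rightarrow> (nat \<Rightarrow> 'a \<Rightarrow> real) \<Rightarrow> nat \<Rightarrow> 'a \<Rightarrow> real mat" where
  "empirical_gram d f X n \<omega> = mat d d (\<lambda>(a, b). (1 / real n) * (\<Sum>i<n. f a (X i \<omega>) * f b (X i \<omega>)))"

definition population_gram :: "'a measure \<Rightarrow> nat \<Rightarrow> (nat \<Rightarrow> real \<Rightarrow> real) \<Rightarrow> ('a \<Rightarrow> real) \<Rightarrow> real mat" where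
  "population_gram M d f Y = mat d d (\<lambda>(a, b). integral\<^sup>L M (\<lambda>\<omega>. f a (Y \<omega>) * f b (Y \<omega>)))"

lemma empirical_gram_carrier: "empirical_gram d f X n \<omega> \<in> carrier_mat d d"
  by (simp add: empirical_gram_def)

lemma population_gram_carrier: "population_gram M d f Y \<in> carrier_mat d d"
  by (simp add: population_gram_def)

lemma empirical_gram_symmetric:
  "a < d \<Longrightarrow> b < d \<Longrightarrow> empirical_gram d f X n \<omega> $$ (a, b) = empirical_gram d f X n \<omega> $$ (b, a)"
  by (simp add: empirical_gram_def mult.commute)

lemma population_gram_symmetric:
  "a < d \<Longrightarrow> b < d \<Longrightarrow> population_gram M d f Y $$ (a, b) = population_gram M d f Y $$ (b, a)"
  by (simp add: population_gram_def mult.commute)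

locale iid_gram_design = prob_space +
  fixes X :: "nat \<Rightarrow> 'a \<Rightarrow> real" and f :: "nat \<Rightarrow> real \<Rightarrow> real" and d :: nat and K v :: real
  assumes indep: "indep_vars (\<lambda>_. borel) X UNIV"
    and identically_distributed: "\<And>i. distr M borel (X i) = distr M borel (X 0)"
    and basis_measurable [measurable]: "\<And>a. f a \<in> borel_measurable borel"
    and basis_bounded: "\<And>a x. \<bar>f a x\<bar> \<le> K"
    and basis_second_moment: "\<And>a. a < d \<Longrightarrow> expectation (\<lambda>\<omega>. (f a (X 0 \<omega>))\<^sup>2) \<le> v"
    and d_pos: "0 < d" and K_pos: "0 < K" and v_pos: "0 < v"
begin

abbreviation deviation :: "nat \<Rightarrow> 'a \<Rightarrow> real mat" where
  "deviation n \<omega> \<equiv> empirical_gram d f X n \<omega> - population_gram M d f (X 0)"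

lemma X_measurable [measurable]: "X i \<in> borel_measurable M"
  using indep unfolding indep_vars_def by auto

lemma expectation_X_eq:
  fixes g :: "real \<Rightarrow> real"
  assumes [measurable]: "g \<in> borel_measurable borel"
  shows "expectation (\<lambda>\<omega>. g (X i \<omega>)) = expectation (\<lambda>\<omega>. g (X 0 \<omega>))"
  using integral_distr[of "X i" M borel g] integral_distr[of "X 0" M borel g]
  by (simp add: identically_distributed[of i])

lemma basis_product_bounded: "\<bar>f a x * f b x\<bar> \<le> K\<^sup>2"
proof -
  have "\<bar>f a x\<bar> * \<bar>f b x\<bar> \<le> K * K"
    by (rule mult_mono[OF basis_bounded basis_bounded]) (use K_pos in auto)
  then show ?thesis
    by (simp add: abs_mult power2_eq_square)
qed

lemma basis_square_le: "(f a x)\<^sup>2 \<le> K\<^sup>2"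
  using basis_bounded[of a x] K_pos by (simp add: abs_le_square_iff[symmetric])

lemma basis_product_second_moment:
  assumes "a < d"
  shows "expectation (\<lambda>\<omega>. (f a (X i \<omega>) * f b (X i \<omega>))\<^sup>2) \<le> K\<^sup>2 * v"
proof -
  have "expectation (\<lambda>\<omega>. (f a (X i \<omega>) * f b (X i \<omega>))\<^sup>2)
      = expectation (\<lambda>\<omega>. (f a (X 0 \<omega>))\<^sup>2 * (f b (X 0 \<omega>))\<^sup>2)"
    by (subst expectation_X_eq) (simp_all add: power_mult_distrib)
  also have "\<dots> \<le> expectation (\<lambda>\<omega>. (f a (X 0 \<omega>))\<^sup>2 * K\<^sup>2)"
  proof (rule integral_mono)
    have product_le: "(f a y)\<^sup>2 * (f b z)\<^sup>2 \<le> K\<^sup>2 * K\<^sup>2" for y z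
      by (intro mult_mono basis_square_le) auto
    show "integrable M (\<lambda>\<omega>. (f a (X 0 \<omega>))\<^sup>2 * (f b (X 0 \<omega>))\<^sup>2)"
      by (rule integrable_bounded_real[where B = "K\<^sup>2 * K\<^sup>2"])
        (measurable, simp only: abs_mult abs_power2 product_le)
    have scaled_le: "(f a y)\<^sup>2 * K\<^sup>2 \<le> K\<^sup>2 * K\<^sup>2" for y
      by (intro mult_right_mono basis_square_le) auto
    show "integrable M (\<lambda>\<omega>. (f a (X 0 \<omega>))\<^sup>2 * K\<^sup>2)"
      by (rule integrable_bounded_real[where B = "K\<^sup>2 * K\<^sup>2"])
        (measurable, simp only: abs_mult abs_power2 scaled_le)
  qed (simp add: mult_left_mono basis_square_le)
  also have "\<dots> = K\<^sup>2 * expectation (\<lambda>\<omega>. (f a (X 0 \<omega>))\<^sup>2)"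
    by (simp add: mult.commute)
  also have "\<dots> \<le> K\<^sup>2 * v"
    using basis_second_moment[OF assms] by (simp add: mult_left_mono)
  finally show ?thesis .
qed

lemma index_deviation:
  assumes "a < d" and "b < d"
  shows "deviation n \<omega> $$ (a, b)
    = (1 / real n) * (\<Sum>i<n. f a (X i \<omega>) * f b (X i \<omega>)) - expectation (\<lambda>\<omega>. f a (X 0 \<omega>) * f b (X 0 \<omega>))"
  using assms by (simp add: empirical_gram_def population_gram_def)

lemma index_deviation_eq_diff:
  assumes "a < d" and "b < d"
  shows "deviation n \<omega> $$ (a, b) = empirical_gram d f X n \<omega> $$ (a, b) - population_gram M d f (X 0) $$ (a, b)"
  using assms by (simp add: empirical_gram_def population_gram_def)

lemma small_deviation_entries:
  assumes "\<omega> \<in> space M" and "\<omega> \<notin> (\<Union>a<d. \<Union>b<d. {\<omega> \<in> space M. u \<le> \<bar>deviation n \<omega> $$ (a, b)\<bar>})"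
    and "a < d" and "b < d"
  shows "\<bar>empirical_gram d f X n \<omega> $$ (a, b) - population_gram M d f (X 0) $$ (a, b)\<bar> < u"
proof -
  have "\<not> u \<le> \<bar>deviation n \<omega> $$ (a, b)\<bar>"
    using assms by blast
  then show ?thesis
    using assms(3,4) by (simp add: index_deviation_eq_diff)
qed

lemma deviation_entry_tail:
  assumes "0 < n" and "0 < u" and "a < d" and "b < d"
  shows "prob {\<omega> \<in> space M. u \<le> \<bar>deviation n \<omega> $$ (a, b)\<bar>}
    \<le> 2 * exp (- real n * bernstein_exponent (K\<^sup>2) (K\<^sup>2 * v) u)"
  unfolding index_deviation[OF assms(3,4)]
proof (rule bernstein_two_sided)
  show "indep_vars (\<lambda>_. borel) (\<lambda>i \<omega>. f a (X i \<omega>) * f b (X i \<omega>)) {..<n}"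
    by (rule indep_vars_compose2[OF indep_vars_subset[OF indep]]) auto
  show "expectation (\<lambda>\<omega>. f a (X i \<omega>) * f b (X i \<omega>)) = expectation (\<lambda>\<omega>. f a (X 0 \<omega>) * f b (X 0 \<omega>))"
    for i
    by (rule expectation_X_eq) measurable
qed (use assms K_pos v_pos basis_product_bounded basis_product_second_moment in auto)

lemma deviation_entries_tail:
  assumes "0 < n" and "0 < u"
  shows "prob (\<Union>a<d. \<Union>b<d. {\<omega> \<in> space M. u \<le> \<bar>deviation n \<omega> $$ (a, b)\<bar>})
    \<le> 2 * real d ^ 2 * exp (- real n * bernstein_exponent (K\<^sup>2) (K\<^sup>2 * v) u)"
proof -
  let ?A = "\<lambda>p. {\<omega> \<in> space M. u \<le> \<bar>deviation n \<omega> $$ p\<bar>}"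
  have sets: "?A p \<in> events" if "p \<in> {..<d} \<times> {..<d}" for p
    using that by (auto simp: index_deviation)
  have "prob (\<Union>a<d. \<Union>b<d. ?A (a, b)) = prob (\<Union>p\<in>{..<d} \<times> {..<d}. ?A p)"
    by (rule arg_cong[where f = prob]) auto
  also have "\<dots> \<le> (\<Sum>p\<in>{..<d} \<times> {..<d}. prob (?A p))"
    using sets by (intro finite_measure_subadditive_finite) auto
  also have "\<dots> \<le> (\<Sum>p\<in>{..<d} \<times> {..<d}. 2 * exp (- real n * bernstein_exponent (K\<^sup>2) (K\<^sup>2 * v) u))"
    using deviation_entry_tail[OF assms] by (intro sum_mono) auto
  finally show ?thesis
    by (simp add: power2_eq_square)
qed

lemma deviation_entries_events: "(\<Union>a<d. \<Union>b<d. {\<omega> \<in> space M. u \<le> \<bar>deviation n \<omega> $$ (a, b)\<bar>}) \<in> events"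
  by (auto simp: index_deviation)

text \<open>Both eigenvalue events are contained in the event that some entry of the deviation is
  large, because a matrix with entries below \<open>u\<close> has spectral radius below \<open>d u\<close>.\<close>

lemma lam_max_tail:
  assumes "0 < n" and "0 < u" and "lam_max (population_gram M d f (X 0)) + real d * u \<le> t"
  shows "prob {\<omega> \<in> space M. t \<le> lam_max (empirical_gram d f X n \<omega>)}
    \<le> 2 * real d ^ 2 * exp (- real n * bernstein_exponent (K\<^sup>2) (K\<^sup>2 * v) u)"
proof -
  have "{\<omega> \<in> space M. t \<le> lam_max (empirical_gram d f X n \<omega>)}
      \<subseteq> (\<Union>a<d. \<Union>b<d. {\<omega> \<in> space M. u \<le> \<bar>deviation n \<omega> $$ (a, b)\<bar>})"
  proof (rule subsetI, rule ccontr)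
    fix \<omega> assume \<omega>: "\<omega> \<in> {\<omega> \<in> space M. t \<le> lam_max (empirical_gram d f X n \<omega>)}"
      and "\<omega> \<notin> (\<Union>a<d. \<Union>b<d. {\<omega> \<in> space M. u \<le> \<bar>deviation n \<omega> $$ (a, b)\<bar>})"
    then have "\<bar>empirical_gram d f X n \<omega> $$ (a, b) - population_gram M d f (X 0) $$ (a, b)\<bar> < u"
      if "a < d" "b < d" for a b
      using that by (intro small_deviation_entries) auto
    then have "lam_max (empirical_gram d f X n \<omega>) < lam_max (population_gram M d f (X 0)) + real d * u"
      by (intro lam_max_less_of_entries_close[OF empirical_gram_carrier population_gram_carrier d_pos])
        (auto intro: empirical_gram_symmetric population_gram_symmetric)
    with \<omega> assms(3) show False
      by simp
  qed
  then have "prob {\<omega> \<in> space M. t \<le> lam_max (empirical_gram d f X n \<omega>)}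
      \<le> prob (\<Union>a<d. \<Union>b<d. {\<omega> \<in> space M. u \<le> \<bar>deviation n \<omega> $$ (a, b)\<bar>})"
    using deviation_entries_events by (rule finite_measure_mono)
  also have "\<dots> \<le> 2 * real d ^ 2 * exp (- real n * bernstein_exponent (K\<^sup>2) (K\<^sup>2 * v) u)"
    by (rule deviation_entries_tail[OF assms(1,2)])
  finally show ?thesis .
qed

lemma extreme_eigenvalues_deviation_tail:
  assumes "0 < n" and "0 < u" and "real d * u \<le> t"
  shows "prob {\<omega> \<in> space M. t \<le> max \<bar>lam_max (deviation n \<omega>)\<bar> \<bar>lam_min (deviation n \<omega>)\<bar>}
    \<le> 2 * real d ^ 2 * exp (- real n * bernstein_exponent (K\<^sup>2) (K\<^sup>2 * v) u)"
proof -
  have "{\<omega> \<in> space M. t \<le> max \<bar>lam_max (deviation n \<omega>)\<bar> \<bar>lam_min (deviation n \<omega>)\<bar>}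
      \<subseteq> (\<Union>a<d. \<Union>b<d. {\<omega> \<in> space M. u \<le> \<bar>deviation n \<omega> $$ (a, b)\<bar>})"
  proof (rule subsetI, rule ccontr)
    fix \<omega> assume \<omega>: "\<omega> \<in> {\<omega> \<in> space M. t \<le> max \<bar>lam_max (deviation n \<omega>)\<bar> \<bar>lam_min (deviation n \<omega>)\<bar>}"
      and "\<omega> \<notin> (\<Union>a<d. \<Union>b<d. {\<omega> \<in> space M. u \<le> \<bar>deviation n \<omega> $$ (a, b)\<bar>})"
    then have "\<bar>deviation n \<omega> $$ (a, b)\<bar> < u" if "a < d" "b < d" for a b
      using that small_deviation_entries[of \<omega> u n a b] by (auto simp: index_deviation_eq_diff)
    moreover have "deviation n \<omega> $$ (a, b) = deviation n \<omega> $$ (b, a)" if "a < d" "b < d" for a b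
      using that by (simp add: index_deviation_eq_diff empirical_gram_symmetric population_gram_symmetric)
    ultimately have "max \<bar>lam_max (deviation n \<omega>)\<bar> \<bar>lam_min (deviation n \<omega>)\<bar> < real d * u"
      by (intro extreme_eigenvalues_less_of_entries_small minus_carrier_mat[OF population_gram_carrier]
          d_pos) auto
    with \<omega> assms(3) show False
      by simp
  qed
  then have "prob {\<omega> \<in> space M. t \<le> max \<bar>lam_max (deviation n \<omega>)\<bar> \<bar>lam_min (deviation n \<omega>)\<bar>}
      \<le> prob (\<Union>a<d. \<Union>b<d. {\<omega> \<in> space M. u \<le> \<bar>deviation n \<omega> $$ (a, b)\<bar>})"
    using deviation_entries_events by (rule finite_measure_mono)
  also have "\<dots> \<le> 2 * real d ^ 2 * exp (- real n * bernstein_exponent (K\<^sup>2) (K\<^sup>2 * v) u)"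
    by (rule deviation_entries_tail[OF assms(1,2)])
  finally show ?thesis .
qed

end

section \<open>Rates for B-spline dimensions\<close>

lemma bernstein_exponent_gram_ge:
  assumes "0 < C" and "0 < b" and "1 \<le> D" and "0 < w"
  shows "min (w\<^sup>2) w / (4 * C * (b + 1)) / D ^ 3 \<le> bernstein_exponent C (C * (b / D)) (w / D\<^sup>2)"
proof -
  have "0 < D"
    using assms by simp
  have "D\<^sup>2 \<le> D ^ 3"
    using \<open>1 \<le> D\<close> by (simp add: power_increasing)
  also have "\<dots> \<le> (b + 1) * D ^ 3"
    using \<open>0 < b\<close> \<open>0 < D\<close> by simp
  finally have "4 * C * D\<^sup>2 \<le> 4 * C * (b + 1) * D ^ 3"
    using \<open>0 < C\<close> by simp
  moreover have "4 * C * b * D ^ 3 \<le> 4 * C * (b + 1) * D ^ 3"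
    using \<open>0 < C\<close> \<open>0 < D\<close> by simp
  moreover have "min (w\<^sup>2) w / (4 * C * (b + 1)) / D ^ 3 = min (w\<^sup>2) w / (4 * C * (b + 1) * D ^ 3)"
    by simp
  ultimately have first: "min (w\<^sup>2) w / (4 * C * (b + 1)) / D ^ 3 \<le> w\<^sup>2 / (4 * C * b * D ^ 3)"
    and second: "min (w\<^sup>2) w / (4 * C * (b + 1)) / D ^ 3 \<le> w / (4 * C * D\<^sup>2)"
    using assms \<open>0 < D\<close> by (auto intro!: frac_le)
  show ?thesis
    unfolding bernstein_exponent_def
  proof (rule min.boundedI)
    show "min (w\<^sup>2) w / (4 * C * (b + 1)) / D ^ 3 \<le> (w / D\<^sup>2)\<^sup>2 / (4 * (C * (b / D)))"
      using first assms \<open>0 < D\<close> by (simp add: field_simps power2_eq_square power3_eq_cube)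
    show "min (w\<^sup>2) w / (4 * C * (b + 1)) / D ^ 3 \<le> w / D\<^sup>2 / (4 * C)"
      using second by (simp add: mult.commute)
  qed
qed

lemma min_mult_square_le:
  fixes a b p :: real
  assumes "0 \<le> b" and "0 \<le> p" and "p \<le> 1"
  shows "min a b * p\<^sup>2 \<le> min (a * p\<^sup>2) (b * p)"
proof -
  have "b * p\<^sup>2 \<le> b * p"
    using assms by (intro mult_left_mono) (auto simp: power2_eq_square mult_left_le_one_le)
  moreover have "min a b * p\<^sup>2 \<le> a * p\<^sup>2" "min a b * p\<^sup>2 \<le> b * p\<^sup>2"
    by (simp_all add: mult_right_mono)
  ultimately show ?thesis
    by simp
qed

lemma gram_lam_max_concentration:
  fixes d :: "nat \<Rightarrow> nat" and f :: "nat \<Rightarrow> nat \<Rightarrow> real \<Rightarrow> real"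
  assumes design: "\<And>n. iid_gram_design M X (f n) (d n) K (b3 / real (d n))"
    and "0 < b3"
    and population: "\<And>n. lam_max (population_gram M (d n) (f n) (X 0)) \<le> b2 / real (d n)"
  shows "\<exists>c4>0. \<forall>\<^sub>F n in sequentially.
    measure M {\<omega> \<in> space M. (b2 + 1) / real (d n) \<le> lam_max (empirical_gram (d n) (f n) X n \<omega>)}
      \<le> 2 * real (d n) ^ 2 * exp (- c4 * real n / real (d n) ^ 3)"
proof -
  have "0 < K"
    using iid_gram_design.K_pos[OF design] .
  define c4 where "c4 = 1 / (4 * K\<^sup>2 * (b3 + 1))"
  have "0 < c4"
    using \<open>0 < K\<close> \<open>0 < b3\<close> by (simp add: c4_def)
  moreover have "measure M {\<omega> \<in> space M. (b2 + 1) / real (d n) \<le> lam_max (empirical_gram (d n) (f n) X n \<omega>)}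
      \<le> 2 * real (d n) ^ 2 * exp (- c4 * real n / real (d n) ^ 3)" if "1 \<le> n" for n
  proof -
    interpret iid_gram_design M X "f n" "d n" K "b3 / real (d n)"
      by (rule design)
    let ?u = "1 / real (d n) ^ 2"
    let ?E = "bernstein_exponent (K\<^sup>2) (K\<^sup>2 * (b3 / real (d n))) ?u"
    have "lam_max (population_gram M (d n) (f n) (X 0)) + real (d n) * ?u \<le> (b2 + 1) / real (d n)"
      using population[of n] d_pos by (simp add: power2_eq_square add_divide_distrib)
    then have "prob {\<omega> \<in> space M. (b2 + 1) / real (d n) \<le> lam_max (empirical_gram (d n) (f n) X n \<omega>)}
        \<le> 2 * real (d n) ^ 2 * exp (- real n * ?E)"
      using lam_max_tail[of n ?u "(b2 + 1) / real (d n)"] \<open>1 \<le> n\<close> d_pos by simp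
    also have "\<dots> \<le> 2 * real (d n) ^ 2 * exp (- c4 * real n / real (d n) ^ 3)"
    proof -
      have "c4 / real (d n) ^ 3 \<le> ?E"
        using bernstein_exponent_gram_ge[of "K\<^sup>2" b3 "real (d n)" 1] K_pos \<open>0 < b3\<close> d_pos
        by (simp add: c4_def)
      then have "c4 * real n / real (d n) ^ 3 \<le> real n * ?E"
        using mult_left_mono[of "c4 / real (d n) ^ 3" ?E "real n"] by (simp add: mult.commute)
      then show ?thesis
        by (intro mult_left_mono) simp_all
    qed
    finally show ?thesis .
  qed
  ultimately show ?thesis
    by (auto intro: eventually_sequentiallyI)
qed

lemma powr_neg_square_mult:
  fixes x \<tau> :: real
  assumes "0 < x"
  shows "x * (x powr - \<tau>)\<^sup>2 = x powr (1 - 2 * \<tau>)"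
proof -
  have "x * (x powr - \<tau>)\<^sup>2 = x powr 1 * x powr (- \<tau>) * x powr (- \<tau>)"
    using assms by (simp add: power2_eq_square)
  also have "\<dots> = x powr (1 + - \<tau> + - \<tau>)"
    by (simp only: powr_add)
  also have "\<dots> = x powr (1 - 2 * \<tau>)"
    by (rule arg_cong[where f = "\<lambda>e. x powr e"]) simp
  finally show ?thesis .
qed

lemma gram_deviation_concentration:
  fixes d :: "nat \<Rightarrow> nat" and f :: "nat \<Rightarrow> nat \<Rightarrow> real \<Rightarrow> real"
  assumes design: "\<And>n. iid_gram_design M X (f n) (d n) K (b3 / real (d n))"
    and "0 < b3" and "0 \<le> \<tau>"
  shows "\<forall>c5>0. \<exists>c6>0. \<forall>\<^sub>F n in sequentially.
    measure M {\<omega> \<in> space M. c5 / real (d n) * real n powr (- \<tau>) \<le>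
      max \<bar>lam_max (empirical_gram (d n) (f n) X n \<omega> - population_gram M (d n) (f n) (X 0))\<bar>
          \<bar>lam_min (empirical_gram (d n) (f n) X n \<omega> - population_gram M (d n) (f n) (X 0))\<bar>}
      \<le> 2 * real (d n) ^ 2 * exp (- c6 / real (d n) ^ 3 * real n powr (1 - 2 * \<tau>))"
proof (intro allI impI exI conjI eventually_sequentiallyI)
  fix c5 :: real assume "0 < c5"
  have "0 < K"
    using iid_gram_design.K_pos[OF design] .
  define c6 where "c6 = min (c5\<^sup>2) c5 / (4 * K\<^sup>2 * (b3 + 1))"
  show "0 < c6"
    using \<open>0 < K\<close> \<open>0 < b3\<close> \<open>0 < c5\<close> by (simp add: c6_def)
  fix n :: nat assume "1 \<le> n"
  interpret iid_gram_design M X "f n" "d n" K "b3 / real (d n)"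
    by (rule design)
  define p where "p = real n powr - \<tau>"
  have "0 < p" "p \<le> 1"
    using \<open>1 \<le> n\<close> \<open>0 \<le> \<tau>\<close> by (auto simp: p_def powr_le_one_le ge_one_powr_ge_zero powr_minus_divide)
  let ?u = "c5 * p / real (d n) ^ 2"
  have "prob {\<omega> \<in> space M. c5 / real (d n) * real n powr (- \<tau>) \<le>
      max \<bar>lam_max (deviation n \<omega>)\<bar> \<bar>lam_min (deviation n \<omega>)\<bar>}
      \<le> 2 * real (d n) ^ 2 * exp (- real n * bernstein_exponent (K\<^sup>2) (K\<^sup>2 * (b3 / real (d n))) ?u)"
    using \<open>1 \<le> n\<close> \<open>0 < c5\<close> \<open>0 < p\<close> d_pos
    by (intro extreme_eigenvalues_deviation_tail) (auto simp: p_def power2_eq_square)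
  also have "\<dots> \<le> 2 * real (d n) ^ 2 * exp (- c6 / real (d n) ^ 3 * real n powr (1 - 2 * \<tau>))"
  proof -
    have "c6 / real (d n) ^ 3 * real n powr (1 - 2 * \<tau>)
        = real n * (min (c5\<^sup>2) c5 * p\<^sup>2 / (4 * K\<^sup>2 * (b3 + 1)) / real (d n) ^ 3)"
      using \<open>1 \<le> n\<close> powr_neg_square_mult[of "real n" \<tau>] by (simp add: c6_def p_def field_simps)
    also have "\<dots> \<le> real n * (min ((c5 * p)\<^sup>2) (c5 * p) / (4 * K\<^sup>2 * (b3 + 1)) / real (d n) ^ 3)"
      using min_mult_square_le[of c5 p "c5\<^sup>2"] \<open>0 < c5\<close> \<open>0 < p\<close> \<open>p \<le> 1\<close> \<open>0 < K\<close> \<open>0 < b3\<close>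
      by (intro mult_left_mono divide_right_mono) (auto simp: power_mult_distrib min.commute)
    also have "\<dots> \<le> real n * bernstein_exponent (K\<^sup>2) (K\<^sup>2 * (b3 / real (d n))) ?u"
      using bernstein_exponent_gram_ge[of "K\<^sup>2" b3 "real (d n)" "c5 * p"] \<open>0 < K\<close> \<open>0 < b3\<close> d_pos
        \<open>0 < c5\<close> \<open>0 < p\<close> by (intro mult_left_mono) auto
    finally show ?thesis
      by (intro mult_left_mono) simp_all
  qed
  finally show "prob {\<omega> \<in> space M. c5 / real (d n) * real n powr (- \<tau>) \<le>
      max \<bar>lam_max (deviation n \<omega>)\<bar> \<bar>lam_min (deviation n \<omega>)\<bar>}
      \<le> 2 * real (d n) ^ 2 * exp (- c6 / real (d n) ^ 3 * real n powr (1 - 2 * \<tau>))" .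
qed

theorem lemma8p1:
  fixes M :: "'a measure" and X :: "nat \<Rightarrow> 'a \<Rightarrow> real"
    and l :: nat and k :: "nat \<Rightarrow> nat" and s :: "nat \<Rightarrow> nat \<Rightarrow> real"
    and \<tau> b2 b3 :: real
  defines "EM \<equiv> (\<lambda>n. Matrix.mat (k n + l) (k n + l)
            (\<lambda>(a, b). prob_space.expectation M (\<lambda>\<omega>. Bspline l (k n) (s n) a (X 0 \<omega>) * Bspline l (k n) (s n) b (X 0 \<omega>))))"
    and "PM \<equiv> (\<lambda>n \<omega>. Matrix.mat (k n + l) (k n + l)
            (\<lambda>(a, b). (1 / real n) * (\<Sum>i<n. Bspline l (k n) (s n) a (X i \<omega>) * Bspline l (k n) (s n) b (X i \<omega>))))"
  assumes "prob_space M"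
    and "\<And>i. X i \<in> borel_measurable M"
    and "prob_space.indep_vars M (\<lambda>_. borel) X UNIV"
    and "\<And>i. distr M borel (X i) = distr M borel (X 0)"
    and "\<And>i \<omega>. \<omega> \<in> space M \<Longrightarrow> X i \<omega> \<in> {0..1}"
    and "\<And>n. k n \<ge> 1"
    and "\<And>n. s n 0 = 0" and "\<And>n. s n (k n) = 1"
    and "\<And>n i. i < k n \<Longrightarrow> s n i < s n (Suc i)"
    and "\<tau> \<ge> 0" and "b2 > 0" and "b3 > 0"
    and "\<And>n. lam_max (EM n) \<le> b2 / real (k n + l)"
    and "\<And>n m. m < k n + l \<Longrightarrow>
           prob_space.expectation M (\<lambda>\<omega>. (Bspline l (k n) (s n) m (X 0 \<omega>))\<^sup>2) \<le> b3 / real (k n + l)"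
  shows "(\<exists>c4>0. \<forall>\<^sub>F n in sequentially.
            prob_space.prob M {\<omega> \<in> space M. lam_max (PM n \<omega>) \<ge> (b2 + 1) / real (k n + l)}
              \<le> 2 * real (k n + l) ^ 2 * exp (- c4 * real n / real (k n + l) ^ 3))
       \<and> (\<forall>c5>0. \<exists>c6>0. \<forall>\<^sub>F n in sequentially.
            prob_space.prob M {\<omega> \<in> space M.
                max \<bar>lam_max (PM n \<omega> - EM n)\<bar> \<bar>lam_min (PM n \<omega> - EM n)\<bar> \<ge> c5 / real (k n + l) * real n powr (- \<tau>)}
              \<le> 2 * real (k n + l) ^ 2 * exp (- c6 / real (k n + l) ^ 3 * real n powr (1 - 2 * \<tau>)))"
proof -
  define d where "d n = k n + l" for n
  define f where "f n = Bspline l (k n) (s n)" for n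
  have design: "iid_gram_design M X (f n) (d n) (2 ^ l) (b3 / real (d n))" for n
  proof (intro iid_gram_design.intro iid_gram_design_axioms.intro)
    show "\<bar>f n a x\<bar> \<le> 2 ^ l" for a x
      unfolding f_def using assms(8-11) by (rule Bspline_abs_le)
  qed (use assms(3-6,8,14,16) in \<open>auto simp: d_def f_def Suc_le_eq intro!: divide_pos_pos add_pos_nonneg\<close>)
  have EM: "EM n = population_gram M (d n) (f n) (X 0)" for n
    by (simp add: EM_def population_gram_def d_def f_def)
  have PM: "PM n \<omega> = empirical_gram (d n) (f n) X n \<omega>" for n \<omega>
    by (simp add: PM_def empirical_gram_def d_def f_def)
  have population: "lam_max (population_gram M (d n) (f n) (X 0)) \<le> b2 / real (d n)" for n
    using assms(15)[of n] by (simp add: EM d_def)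
  show ?thesis
    using gram_lam_max_concentration[OF design \<open>0 < b3\<close> population]
      gram_deviation_concentration[OF design \<open>0 < b3\<close> \<open>0 \<le> \<tau>\<close>]
    unfolding EM PM by (simp add: d_def)
qed

end
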